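(* Let $G_1,\dots,G_n$ be groups and $G\leqslant G_1\times\dots\times G_n$ a subgroup whose projection onto each $G_i$ is surjective. Suppose $G$ has abelian entanglements with respect to $G_1\times\dots\times G_n$, and let $S\subseteq\{1,\dots,n\}$ be nonempty. Then $G_S$ has abelian entanglements with respect to $\prod_{i\in S}G_i$.
   Context: For nonempty $S\subseteq\{1,\dots,n\}$, $G_S$ denotes the image of $G$ under the projection $G_1\times\dots\times G_n\to\prod_{i\in S}G_i$. For a subgroup $H\leqslant H_1\times\dots\times H_k$ surjecting onto each $H_i$, and a partition $\mathcal P=\{A,B\}$ of $\{1,\dots,k\}$ into two nonempty sets, $H$ is a subgroup of $H_A\times H_B$ surjecting onto both factors; with $N_A=\{x\in H_A:(x,1)\in H\}$ (normal in $H_A$), the Goursat quotient is $Q_{\mathcal P}=H_A/N_A$. $H$ has abelian entanglements with respect to $H_1\times\dots\times H_k$ if $Q_{\mathcal P}$ is abelian for all such $\mathcal P$. *)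

theory Defs
  imports "HOL-Algebra.Algebra"
begin

definition proj_set :: "'i set \<Rightarrow> ('i \<Rightarrow> 'a) set \<Rightarrow> ('i \<Rightarrow> 'a) set" where
  "proj_set A H = (\<lambda>x. restrict x A) ` H"

definition proj_group ::
  "('i \<Rightarrow> ('a, 'b) monoid_scheme) \<Rightarrow> 'i set \<Rightarrow> ('i \<Rightarrow> 'a) set \<Rightarrow> ('i \<Rightarrow> 'a) monoid" where
  "proj_group Gs A H = (product_group A Gs)\<lparr>carrier := proj_set A H\<rparr>"

definition goursat_kernel ::
  "('i \<Rightarrow> ('a, 'b) monoid_scheme) \<Rightarrow> 'i set \<Rightarrow> 'i set \<Rightarrow> ('i \<Rightarrow> 'a) set \<Rightarrow> ('i \<Rightarrow> 'a) set" where
  "goursat_kernel Gs A B H =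
     {x \<in> proj_set A H.
        (\<lambda>i. if i \<in> A then x i else if i \<in> B then \<one>\<^bsub>Gs i\<^esub> else undefined) \<in> H}"

definition goursat_quotient ::
  "('i \<Rightarrow> ('a, 'b) monoid_scheme) \<Rightarrow> 'i set \<Rightarrow> 'i set \<Rightarrow> ('i \<Rightarrow> 'a) set \<Rightarrow> ('i \<Rightarrow> 'a) set monoid" where
  "goursat_quotient Gs A B H = proj_group Gs A H Mod goursat_kernel Gs A B H"

definition abelian_entanglements ::
  "('i \<Rightarrow> ('a, 'b) monoid_scheme) \<Rightarrow> 'i set \<Rightarrow> ('i \<Rightarrow> 'a) set \<Rightarrow> bool" where
  "abelian_entanglements Gs I H \<longleftrightarrow>
     (\<forall>A B. A \<noteq> {} \<and> B \<noteq> {} \<and> A \<inter> B = {} \<and> A \<union> B = I \<longrightarrow>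
        comm_group (goursat_quotient Gs A B H))"

end

theory Submission
  imports Defs
begin

text \<open>For a partition \<open>{A, B}\<close> of \<open>S\<close>, the Goursat kernel of \<open>G\<^sub>S\<close> is the
  \<open>A\<close>-projection of \<open>{g \<in> G. g\<^sub>i = 1 for i \<in> B}\<close>. Replacing \<open>B\<close> by the full
  complement \<open>B' = I - A\<close> only shrinks this set, so the kernel for the partition \<open>{A, B'}\<close>
  of \<open>I\<close> lies inside the kernel for \<open>{A, B}\<close>; both are normal in \<open>G\<^sub>A = (G\<^sub>S)\<^sub>A\<close>.
  Hence \<open>Q\<^sub>{A,B}(G\<^sub>S)\<close> is a quotient of the abelian group \<open>Q\<^sub>{A,B'}(G)\<close>.\<close>

lemma (in normal) comm_group_FactGroupI:
  assumes "derived G (carrier G) \<subseteq> H"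
  shows "comm_group (G Mod H)"
proof (rule group.group_comm_groupI[OF factorgroup_is_group])
  fix U V assume "U \<in> carrier (G Mod H)" "V \<in> carrier (G Mod H)"
  then obtain x y where x: "x \<in> carrier G" "U = H #> x" and y: "y \<in> carrier G" "V = H #> y"
    by (auto simp: FactGroup_def RCOSETS_def)
  have "x \<otimes> y \<otimes> inv x \<otimes> inv y \<in> H"
    using assms x y generate.incl[of _ "derived_set G (carrier G)"] unfolding derived_def by blast
  then have "(x \<otimes> y) \<otimes> inv (y \<otimes> x) \<in> H"
    using x y by (simp add: inv_mult_group m_assoc)
  then have "x \<otimes> y \<in> H #> (y \<otimes> x)"
    using x y by (simp add: rcos_module_rev[OF is_group])
  then have "H #> (x \<otimes> y) = H #> (y \<otimes> x)"
    using x y by (simp add: repr_independence subgroup_axioms)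
  then show "U \<otimes>\<^bsub>G Mod H\<^esub> V = V \<otimes>\<^bsub>G Mod H\<^esub> U"
    using x y by (simp add: FactGroup_def rcos_sum)
qed

lemma comm_group_FactGroup_mono:
  assumes "N \<lhd> G" "N' \<lhd> G" "N \<subseteq> N'" "comm_group (G Mod N)"
  shows "comm_group (G Mod N')"
  using normal.comm_group_FactGroupI[OF assms(2)]
    group.derived_minimal[OF normal.axioms(2)[OF assms(1)] assms(1,4)] assms(3)
  by blast

lemma restrict_group_hom:
  assumes "\<And>i. i \<in> I \<Longrightarrow> group (Gs i)" "A \<subseteq> I"
  shows "group_hom (product_group I Gs) (product_group A Gs) (\<lambda>x. restrict x A)"
proof -
  have "group (product_group A Gs)"
    using assms by (intro product_group) auto
  then show ?thesis
    using assms by (auto simp: group_hom_def group_hom_axioms_def hom_def PiE_def Pi_def fun_eq_iff)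
qed

lemma proj_group_hom:
  assumes "\<And>i. i \<in> I \<Longrightarrow> group (Gs i)" "A \<subseteq> I" "subgroup H (product_group I Gs)"
  shows "group_hom ((product_group I Gs)\<lparr>carrier := H\<rparr>) (proj_group Gs A H) (\<lambda>x. restrict x A)"
proof -
  interpret restr: group_hom "product_group I Gs" "product_group A Gs" "\<lambda>x. restrict x A"
    using assms(1,2) by (rule restrict_group_hom)
  have "subgroup (proj_set A H) (product_group A Gs)"
    unfolding proj_set_def using assms(3) by (rule restr.subgroup_img_is_subgroup)
  then have "group (proj_group Gs A H)"
    unfolding proj_group_def by (rule restr.H.subgroup_imp_group)
  moreover have "group ((product_group I Gs)\<lparr>carrier := H\<rparr>)"
    using assms(3) by (rule restr.G.subgroup_imp_group)
  moreover have "(\<lambda>x. restrict x A) \<in> hom ((product_group I Gs)\<lparr>carrier := H\<rparr>) (proj_group Gs A H)"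
    unfolding hom_def proj_group_def proj_set_def using assms(2) subgroup.subset[OF assms(3)]
    by (auto simp: fun_eq_iff)
  ultimately show ?thesis
    by (simp add: group_hom_def group_hom_axioms_def)
qed

lemma proj_set_proj_set:
  assumes "A \<subseteq> J"
  shows "proj_set A (proj_set J H) = proj_set A H"
  unfolding proj_set_def image_image using assms
  by (intro image_cong refl) (auto simp: fun_eq_iff)

lemma proj_set_carrier:
  assumes "H \<subseteq> carrier (product_group I Gs)"
  shows "proj_set I H = H"
proof -
  have "restrict h I = h" if "h \<in> H" for h
    using that assms by (auto simp: PiE_def extensional_restrict)
  then show ?thesis
    by (simp add: proj_set_def)
qed

lemma kernel_restrict_proj_group:
  "kernel ((product_group I Gs)\<lparr>carrier := H\<rparr>) (proj_group Gs B H) (\<lambda>x. restrict x B)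
     = {h \<in> H. \<forall>i\<in>B. h i = \<one>\<^bsub>Gs i\<^esub>}"
  by (auto simp: kernel_def proj_group_def restrict_def fun_eq_iff)

lemma goursat_kernel_proj_set:
  assumes "A \<inter> B = {}" "A \<union> B = J"
  shows "goursat_kernel Gs A B (proj_set J H) = proj_set A {h \<in> H. \<forall>i\<in>B. h i = \<one>\<^bsub>Gs i\<^esub>}"
proof -
  define pad where "pad x = (\<lambda>i. if i \<in> A then x i else if i \<in> B then \<one>\<^bsub>Gs i\<^esub> else undefined)" for x
  have pad_eq_iff: "pad (restrict h A) = restrict h J \<longleftrightarrow> (\<forall>i\<in>B. h i = \<one>\<^bsub>Gs i\<^esub>)" for h
    using assms by (auto simp: pad_def fun_eq_iff)
  have "goursat_kernel Gs A B (proj_set J H) = {x \<in> proj_set A H. pad x \<in> proj_set J H}"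
    using proj_set_proj_set[of A J H] assms(2) by (auto simp: goursat_kernel_def pad_def)
  also have "\<dots> = proj_set A {h \<in> H. \<forall>i\<in>B. h i = \<one>\<^bsub>Gs i\<^esub>}"
  proof (intro equalityI subsetI)
    fix x assume "x \<in> {x \<in> proj_set A H. pad x \<in> proj_set J H}"
    then obtain g h where "x = restrict g A" "h \<in> H" "pad x = restrict h J"
      by (auto simp: proj_set_def)
    have x: "x = restrict h A"
    proof
      fix i
      show "x i = restrict h A i"
        using fun_cong[OF \<open>pad x = restrict h J\<close>, of i] \<open>x = restrict g A\<close> assms
        by (auto simp: pad_def)
    qed
    have "pad (restrict h A) = restrict h J"
      using \<open>pad x = restrict h J\<close> by (simp only: x[symmetric])
    with \<open>h \<in> H\<close> have "h \<in> {h \<in> H. \<forall>i\<in>B. h i = \<one>\<^bsub>Gs i\<^esub>}"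
      using pad_eq_iff by blast
    then show "x \<in> proj_set A {h \<in> H. \<forall>i\<in>B. h i = \<one>\<^bsub>Gs i\<^esub>}"
      unfolding proj_set_def x by (rule imageI)
  next
    fix x assume "x \<in> proj_set A {h \<in> H. \<forall>i\<in>B. h i = \<one>\<^bsub>Gs i\<^esub>}"
    then show "x \<in> {x \<in> proj_set A H. pad x \<in> proj_set J H}"
      using pad_eq_iff by (auto simp: proj_set_def)
  qed
  finally show ?thesis .
qed

lemma goursat_kernel_normal:
  assumes "\<And>i. i \<in> I \<Longrightarrow> group (Gs i)" "subgroup H (product_group I Gs)"
    and "A \<inter> B = {}" "A \<union> B = J" "J \<subseteq> I"
  shows "goursat_kernel Gs A B (proj_set J H) \<lhd> proj_group Gs A H"
proof -
  have "{h \<in> H. \<forall>i\<in>B. h i = \<one>\<^bsub>Gs i\<^esub>} \<lhd> (product_group I Gs)\<lparr>carrier := H\<rparr>"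
    using group_hom.normal_kernel[OF proj_group_hom[OF assms(1) _ assms(2), of B]] assms(4,5)
    by (auto simp: kernel_restrict_proj_group)
  moreover have "group_hom ((product_group I Gs)\<lparr>carrier := H\<rparr>) (proj_group Gs A H) (\<lambda>x. restrict x A)"
    using proj_group_hom[OF assms(1) _ assms(2)] assms(4,5) by blast
  moreover have "(\<lambda>x. restrict x A) ` carrier ((product_group I Gs)\<lparr>carrier := H\<rparr>) = carrier (proj_group Gs A H)"
    by (simp add: proj_group_def proj_set_def)
  ultimately show ?thesis
    unfolding goursat_kernel_proj_set[OF assms(3,4)] proj_set_def[of A]
    by (rule normal.surj_hom_normal_subgroup)
qed

lemma abelian_entanglements_proj_set:
  assumes groups: "\<And>i. i \<in> I \<Longrightarrow> group (Gs i)"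
    and sub: "subgroup G (product_group I Gs)"
    and ent: "abelian_entanglements Gs I G"
    and S: "S \<subseteq> I"
  shows "abelian_entanglements Gs S (proj_set S G)"
  unfolding abelian_entanglements_def
proof (intro allI impI, elim conjE)
  fix A B assume "A \<noteq> {}" "B \<noteq> {}" "A \<inter> B = {}" "A \<union> B = S"
  define B' where "B' = I - A"
  have AB': "A \<inter> B' = {}" "A \<union> B' = I" and "B \<subseteq> B'" "B' \<noteq> {}"
    using \<open>B \<noteq> {}\<close> \<open>A \<inter> B = {}\<close> \<open>A \<union> B = S\<close> S by (auto simp: B'_def)
  have G: "proj_set I G = G"
    using subgroup.subset[OF sub] by (rule proj_set_carrier)
  have "goursat_kernel Gs A B' G \<lhd> proj_group Gs A G"
    using goursat_kernel_normal[OF groups sub AB' order_refl] unfolding G .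
  moreover have "goursat_kernel Gs A B (proj_set S G) \<lhd> proj_group Gs A G"
    using groups sub \<open>A \<inter> B = {}\<close> \<open>A \<union> B = S\<close> S by (rule goursat_kernel_normal)
  moreover have "goursat_kernel Gs A B' G \<subseteq> goursat_kernel Gs A B (proj_set S G)"
  proof -
    have "proj_set A {h \<in> G. \<forall>i\<in>B'. h i = \<one>\<^bsub>Gs i\<^esub>} \<subseteq> proj_set A {h \<in> G. \<forall>i\<in>B. h i = \<one>\<^bsub>Gs i\<^esub>}"
      unfolding proj_set_def using \<open>B \<subseteq> B'\<close> by (intro image_mono) auto
    then show ?thesis
      using goursat_kernel_proj_set[OF AB', of Gs G]
        goursat_kernel_proj_set[OF \<open>A \<inter> B = {}\<close> \<open>A \<union> B = S\<close>, of Gs G]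
      unfolding G by simp
  qed
  moreover have "comm_group (proj_group Gs A G Mod goursat_kernel Gs A B' G)"
    using ent \<open>A \<noteq> {}\<close> \<open>B' \<noteq> {}\<close> AB'
    unfolding abelian_entanglements_def goursat_quotient_def by blast
  moreover have "proj_group Gs A (proj_set S G) = proj_group Gs A G"
    using \<open>A \<union> B = S\<close> by (auto simp: proj_group_def proj_set_proj_set)
  ultimately show "comm_group (goursat_quotient Gs A B (proj_set S G))"
    unfolding goursat_quotient_def by (simp add: comm_group_FactGroup_mono)
qed

theorem proposition2p7:
  fixes Gs :: "nat \<Rightarrow> ('a, 'b) monoid_scheme"
    and G :: "(nat \<Rightarrow> 'a) set"
    and n :: nat and S :: "nat set"
  assumes groups: "\<And>i. i \<in> {1..n} \<Longrightarrow> group (Gs i)"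
    and sub: "subgroup G (product_group {1..n} Gs)"
    and surj: "\<And>i. i \<in> {1..n} \<Longrightarrow> (\<lambda>x. x i) ` G = carrier (Gs i)"
    and ent: "abelian_entanglements Gs {1..n} G"
    and S: "S \<subseteq> {1..n}" "S \<noteq> {}"
  shows "abelian_entanglements Gs S (proj_set S G)"
  using abelian_entanglements_proj_set[OF groups sub ent S(1)] .

end
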